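(* A quasitopological group $G$ with identity $e$ is dense-connected if and only if $UV=G$ for all open neighborhoods $U$ and $V$ of $e$.
   Context: A quasitopological group is a group with a topology for which multiplication is separately continuous (each left and right translation is continuous) and inversion $x\mapsto x^{-1}$ is continuous; no separation axioms assumed. A space is dense-connected if every dense subset of it (with the subspace topology) is connected. *)

theory Defs
  imports "HOL-Analysis.Analysis" "HOL-Algebra.Coset"
begin

definition quasitopological_group :: "('a, 'b) monoid_scheme \<Rightarrow> 'a topology \<Rightarrow> bool" where
  "quasitopological_group G T \<longleftrightarrow>
     group G \<and> topspace T = carrier G \<and>
     (\<forall>g \<in> carrier G. continuous_map T T (\<lambda>x. g \<otimes>\<^bsub>G\<^esub> x)) \<and>
     (\<forall>g \<in> carrier G. continuous_map T T (\<lambda>x. x \<otimes>\<^bsub>G\<^esub> g)) \<and>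
     continuous_map T T (\<lambda>x. inv\<^bsub>G\<^esub> x)"

definition dense_connected :: "'a topology \<Rightarrow> bool" where
  "dense_connected T \<longleftrightarrow>
     (\<forall>S. S \<subseteq> topspace T \<and> T closure_of S = topspace T \<longrightarrow>
          connected_space (subtopology T S))"

end

theory Submission
  imports Defs
begin

text \<open>A space is dense-connected iff it is hyperconnected (any two nonempty open sets meet):
a dense set split by two disjoint open sets is disconnected, and if an open set \<open>U\<close> misses a
nonempty open set, then \<open>U\<close> together with its exterior is dense and disconnected.
In a quasitopological group, for neighbourhoods \<open>U\<close>, \<open>V\<close> of \<open>\<one>\<close> and any \<open>g\<close>, the open set
\<open>g V\<inverse>\<close> contains \<open>g\<close> and meets \<open>U\<close> exactly when \<open>g \<in> U V\<close>; conversely, open sets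
\<open>O\<^sub>1 \<ni> a\<close> and \<open>O\<^sub>2 \<ni> b\<close> meet as soon as \<open>a\<inverse> b \<in> (a\<inverse> O\<^sub>1) (b\<inverse> O\<^sub>2)\<inverse>\<close>.\<close>

definition hyperconnected_space :: "'a topology \<Rightarrow> bool" where
  "hyperconnected_space T \<longleftrightarrow>
     (\<forall>U V. openin T U \<and> openin T V \<and> U \<noteq> {} \<and> V \<noteq> {} \<longrightarrow> U \<inter> V \<noteq> {})"

lemma dense_Un_exterior: "T closure_of (U \<union> (topspace T - T closure_of U)) = topspace T"
  unfolding dense_intersects_open
proof (intro allI impI)
  fix W assume W: "openin T W \<and> W \<noteq> {}"
  show "(U \<union> (topspace T - T closure_of U)) \<inter> W \<noteq> {}"
  proof (cases "W \<inter> U = {}")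
    case True
    then have "W \<inter> T closure_of U = {}"
      using W openin_Int_closure_of_eq_empty by blast
    then show ?thesis
      using W openin_subset by blast
  qed blast
qed

lemma hyperconnected_imp_dense_connected:
  assumes "hyperconnected_space T"
  shows "dense_connected T"
  unfolding dense_connected_def connected_space_def
proof (intro allI impI notI)
  fix S assume S: "S \<subseteq> topspace T \<and> T closure_of S = topspace T"
  assume "\<exists>E1 E2. openin (subtopology T S) E1 \<and> openin (subtopology T S) E2 \<and>
            topspace (subtopology T S) \<subseteq> E1 \<union> E2 \<and> E1 \<inter> E2 = {} \<and> E1 \<noteq> {} \<and> E2 \<noteq> {}"
  then obtain E1 E2 where E: "openin (subtopology T S) E1" "openin (subtopology T S) E2"
    "E1 \<inter> E2 = {}" "E1 \<noteq> {}" "E2 \<noteq> {}"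
    by blast
  obtain O1 O2 where O: "openin T O1" "E1 = O1 \<inter> S" "openin T O2" "E2 = O2 \<inter> S"
    using E(1,2) openin_subtopology by metis
  have "O1 \<inter> O2 \<noteq> {}"
    using assms O E unfolding hyperconnected_space_def by blast
  moreover have "openin T (O1 \<inter> O2)"
    using O by (simp add: openin_Int)
  ultimately have "S \<inter> (O1 \<inter> O2) \<noteq> {}"
    using S dense_intersects_open by blast
  then show False
    using E O by blast
qed

lemma dense_connected_imp_hyperconnected:
  assumes "dense_connected T"
  shows "hyperconnected_space T"
  unfolding hyperconnected_space_def
proof (intro allI impI notI)
  fix U V assume UV: "openin T U \<and> openin T V \<and> U \<noteq> {} \<and> V \<noteq> {}" and "U \<inter> V = {}"
  define E where "E = topspace T - T closure_of U"
  have "V \<subseteq> E"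
    using UV \<open>U \<inter> V = {}\<close> openin_Int_closure_of_eq_empty[of T V U] openin_subset[of T V]
    unfolding E_def by auto
  have "U \<subseteq> T closure_of U"
    using UV by (meson closure_of_subset openin_subset)
  then have "U \<inter> E = {}"
    unfolding E_def by blast
  have "openin T E"
    unfolding E_def by (simp add: openin_diff)
  have "U \<union> E \<subseteq> topspace T"
    using UV openin_subset unfolding E_def by blast
  moreover have "T closure_of (U \<union> E) = topspace T"
    unfolding E_def by (rule dense_Un_exterior)
  ultimately have "connected_space (subtopology T (U \<union> E))"
    using assms unfolding dense_connected_def by blast
  moreover have "openin (subtopology T (U \<union> E)) U" "openin (subtopology T (U \<union> E)) E"
    using UV \<open>openin T E\<close> unfolding openin_subtopology by blast+
  moreover have "topspace (subtopology T (U \<union> E)) \<subseteq> U \<union> E"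
    by simp
  moreover have "E \<noteq> {}"
    using UV \<open>V \<subseteq> E\<close> by blast
  ultimately show False
    using UV \<open>U \<inter> E = {}\<close> unfolding connected_space_def by meson
qed

lemma dense_connected_iff_hyperconnected: "dense_connected T \<longleftrightarrow> hyperconnected_space T"
  using dense_connected_imp_hyperconnected hyperconnected_imp_dense_connected by blast

context
  fixes G (structure) and T :: "'a topology"
  assumes qtg: "quasitopological_group G T"
begin

interpretation group G
  using qtg unfolding quasitopological_group_def by blast

lemma quasitopological_group_subset_carrier: "openin T W \<Longrightarrow> W \<subseteq> carrier G"
  using qtg openin_subset unfolding quasitopological_group_def by metis

lemma quasitopological_group_openin_left_translate:
  assumes "openin T W" "g \<in> carrier G"
  shows "openin T {x \<in> carrier G. g \<otimes> x \<in> W}"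
  using qtg assms openin_continuous_map_preimage unfolding quasitopological_group_def by metis

lemma quasitopological_group_openin_inverse:
  assumes "openin T W"
  shows "openin T {x \<in> carrier G. inv x \<in> W}"
  using qtg assms openin_continuous_map_preimage unfolding quasitopological_group_def by metis

lemma hyperconnected_imp_set_mult_nhds_eq_carrier:
  assumes hyper: "hyperconnected_space T"
    and U: "openin T U" "\<one> \<in> U" and V: "openin T V" "\<one> \<in> V"
  shows "U <#> V = carrier G"
proof
  show "U <#> V \<subseteq> carrier G"
    using U V quasitopological_group_subset_carrier unfolding set_mult_def by blast
next
  show "carrier G \<subseteq> U <#> V"
  proof
    fix g assume g: "g \<in> carrier G"
    define W where "W = {x \<in> carrier G. inv g \<otimes> x \<in> {y \<in> carrier G. inv y \<in> V}}"
    have "openin T W"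
      unfolding W_def using g V(1)
      by (intro quasitopological_group_openin_left_translate quasitopological_group_openin_inverse) simp_all
    moreover have "g \<in> W"
      using g V unfolding W_def by simp
    ultimately obtain x where x: "x \<in> U" "x \<in> W"
      using hyper U unfolding hyperconnected_space_def by blast
    then have xG: "x \<in> carrier G"
      using U quasitopological_group_subset_carrier by blast
    have "inv x \<otimes> g \<in> V"
      using x(2) xG g unfolding W_def by (simp add: inv_mult_group)
    moreover have "g = x \<otimes> (inv x \<otimes> g)"
      using xG g by (simp add: m_assoc[symmetric])
    ultimately show "g \<in> U <#> V"
      using x(1) unfolding set_mult_def by blast
  qed
qed

lemma set_mult_nhds_eq_carrier_imp_hyperconnected:
  assumes UV: "\<And>U V. \<lbrakk>openin T U; \<one> \<in> U; openin T V; \<one> \<in> V\<rbrakk> \<Longrightarrow> U <#> V = carrier G"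
  shows "hyperconnected_space T"
  unfolding hyperconnected_space_def
proof (intro allI impI)
  fix O1 O2 assume O: "openin T O1 \<and> openin T O2 \<and> O1 \<noteq> {} \<and> O2 \<noteq> {}"
  then obtain a b where ab: "a \<in> O1" "b \<in> O2" by blast
  have abG: "a \<in> carrier G" "b \<in> carrier G"
    using ab O quasitopological_group_subset_carrier by blast+
  define U where "U = {x \<in> carrier G. a \<otimes> x \<in> O1}"
  define V where "V = {x \<in> carrier G. inv x \<in> {y \<in> carrier G. b \<otimes> y \<in> O2}}"
  have "openin T U" "openin T V"
    using O abG quasitopological_group_openin_left_translate quasitopological_group_openin_inverse
    unfolding U_def V_def by blast+
  moreover have "\<one> \<in> U" "\<one> \<in> V"
    using ab abG unfolding U_def V_def by auto
  ultimately have "inv a \<otimes> b \<in> U <#> V"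
    using UV abG by simp
  then obtain u v where uv: "u \<in> U" "v \<in> V" "inv a \<otimes> b = u \<otimes> v"
    unfolding set_mult_def by blast
  have uvG: "u \<in> carrier G" "v \<in> carrier G"
    using uv unfolding U_def V_def by auto
  have "a \<otimes> u = a \<otimes> (u \<otimes> v) \<otimes> inv v"
    using abG uvG by (simp add: m_assoc)
  also have "\<dots> = b \<otimes> inv v"
    using abG by (simp add: uv(3)[symmetric] m_assoc[symmetric])
  finally have "a \<otimes> u = b \<otimes> inv v" .
  moreover have "a \<otimes> u \<in> O1" "b \<otimes> inv v \<in> O2"
    using uv unfolding U_def V_def by auto
  ultimately show "O1 \<inter> O2 \<noteq> {}" by auto
qed

end

theorem theorem4p10:
  fixes G :: "('a, 'b) monoid_scheme" and T :: "'a topology"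
  assumes "quasitopological_group G T"
  shows "dense_connected T \<longleftrightarrow>
           (\<forall>U V. openin T U \<and> \<one>\<^bsub>G\<^esub> \<in> U \<and> openin T V \<and> \<one>\<^bsub>G\<^esub> \<in> V
                  \<longrightarrow> U <#>\<^bsub>G\<^esub> V = carrier G)"
  unfolding dense_connected_iff_hyperconnected
  using hyperconnected_imp_set_mult_nhds_eq_carrier[OF assms]
    set_mult_nhds_eq_carrier_imp_hyperconnected[OF assms]
  by blast

end
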